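(* Let $z\ge0$ and let $(C,F)$ be a $z$-antler in an undirected multigraph $G$. Then there exists $F'\subseteq F$ such that $(C,F')$ is a $z$-antler in $G$ and $G[F']$ has at most $\frac{|C|}{2}(z^2+2z-1)$ trees.
   Context: A feedback vertex set (FVS) of $G$ is a set $X\subseteq V(G)$ with $G-X$ acyclic (self-loops and pairs of parallel edges count as cycles); $\mathrm{fvs}(G)$ is its minimum size. For disjoint $X,Y$, $e(X,Y)$ is the number of edges between $X$ and $Y$. A feedback vertex cut (FVC) in $G$ is a pair of disjoint sets $C,F\subseteq V(G)$ such that $G[F]$ is a forest and every tree $T$ of $G[F]$ satisfies $e(V(T),V(G)\setminus(C\cup F))\le1$. An antler is a FVC $(C,F)$ with $|C|\le\mathrm{fvs}(G[C\cup F])$. For $C\subseteq V(G)$, a $C$-certificate is a subgraph $H$ of $G$ such that $C$ is a minimum FVS of $H$; it has order $z$ if every component $H'$ of $H$ satisfies $\mathrm{fvs}(H')=|C\cap V(H')|\le z$. A $z$-antler is an antler $(C,F)$ such that $G[C\cup F]$ contains a $C$-certificate of order $z$. *)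

theory Defs
  imports Complex_Main
begin

text \<open>Finite undirected multigraphs (loops and parallel edges allowed).
  Every edge e has an endpoint set endpts e of one (a self-loop) or two vertices.\<close>

record ('v, 'e) mgraph =
  verts  :: "'v set"
  edges  :: "'e set"
  endpts :: "'e \<Rightarrow> 'v set"

definition wf_mgraph :: "('v, 'e) mgraph \<Rightarrow> bool" where
  "wf_mgraph G \<longleftrightarrow> finite (verts G) \<and> finite (edges G) \<and>
     (\<forall>e\<in>edges G. endpts G e \<subseteq> verts G \<and> endpts G e \<noteq> {} \<and> card (endpts G e) \<le> 2)"

text \<open>A cycle: distinct vertices v_0..v_(k-1), distinct edges e_0..e_(k-1), k \<ge> 1,
  with e_i joining v_i and v_(i+1 mod k).  k = 1 is a self-loop, k = 2 a pair of parallel edges.\<close>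
definition is_cycle :: "('v, 'e) mgraph \<Rightarrow> 'v list \<Rightarrow> 'e list \<Rightarrow> bool" where
  "is_cycle G vs es \<longleftrightarrow> vs \<noteq> [] \<and> length es = length vs \<and> distinct vs \<and> distinct es \<and>
     set vs \<subseteq> verts G \<and> set es \<subseteq> edges G \<and>
     (\<forall>i<length vs. endpts G (es ! i) = {vs ! i, vs ! ((i + 1) mod length vs)})"

definition forest :: "('v, 'e) mgraph \<Rightarrow> bool" where
  "forest G \<longleftrightarrow> \<not> (\<exists>vs es. is_cycle G vs es)"

definition induced :: "('v, 'e) mgraph \<Rightarrow> 'v set \<Rightarrow> ('v, 'e) mgraph" where
  "induced G X = \<lparr>verts = verts G \<inter> X, edges = {e \<in> edges G. endpts G e \<subseteq> X},
                  endpts = endpts G\<rparr>"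

definition del_verts :: "('v, 'e) mgraph \<Rightarrow> 'v set \<Rightarrow> ('v, 'e) mgraph" where
  "del_verts G X = induced G (verts G - X)"

definition is_fvs :: "('v, 'e) mgraph \<Rightarrow> 'v set \<Rightarrow> bool" where
  "is_fvs G X \<longleftrightarrow> X \<subseteq> verts G \<and> forest (del_verts G X)"

definition fvs :: "('v, 'e) mgraph \<Rightarrow> nat" where
  "fvs G = Min {card X | X. is_fvs G X}"

definition min_fvs :: "('v, 'e) mgraph \<Rightarrow> 'v set \<Rightarrow> bool" where
  "min_fvs G X \<longleftrightarrow> is_fvs G X \<and> card X = fvs G"

definition adj :: "('v, 'e) mgraph \<Rightarrow> 'v \<Rightarrow> 'v \<Rightarrow> bool" where
  "adj G u v \<longleftrightarrow> (\<exists>e\<in>edges G. u \<in> endpts G e \<and> v \<in> endpts G e)"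

definition components :: "('v, 'e) mgraph \<Rightarrow> 'v set set" where
  "components G = {{v \<in> verts G. (adj G)\<^sup>*\<^sup>* u v} | u. u \<in> verts G}"

definition e_between :: "('v, 'e) mgraph \<Rightarrow> 'v set \<Rightarrow> 'v set \<Rightarrow> nat" where
  "e_between G X Y = card {e \<in> edges G. endpts G e \<inter> X \<noteq> {} \<and> endpts G e \<inter> Y \<noteq> {}}"

definition subgraph :: "('v, 'e) mgraph \<Rightarrow> ('v, 'e) mgraph \<Rightarrow> bool" where
  "subgraph H G \<longleftrightarrow> verts H \<subseteq> verts G \<and> edges H \<subseteq> edges G \<and>
     (\<forall>e\<in>edges H. endpts H e = endpts G e \<and> endpts G e \<subseteq> verts H)"

definition FVC :: "('v, 'e) mgraph \<Rightarrow> 'v set \<Rightarrow> 'v set \<Rightarrow> bool" where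
  "FVC G C F \<longleftrightarrow> C \<subseteq> verts G \<and> F \<subseteq> verts G \<and> C \<inter> F = {} \<and> forest (induced G F) \<and>
     (\<forall>T\<in>components (induced G F). e_between G T (verts G - (C \<union> F)) \<le> 1)"

definition antler :: "('v, 'e) mgraph \<Rightarrow> 'v set \<Rightarrow> 'v set \<Rightarrow> bool" where
  "antler G C F \<longleftrightarrow> FVC G C F \<and> card C \<le> fvs (induced G (C \<union> F))"

definition certificate :: "('v, 'e) mgraph \<Rightarrow> 'v set \<Rightarrow> ('v, 'e) mgraph \<Rightarrow> bool" where
  "certificate G C H \<longleftrightarrow> subgraph H G \<and> min_fvs H C"

definition certificate_of_order :: "('v, 'e) mgraph \<Rightarrow> 'v set \<Rightarrow> nat \<Rightarrow> ('v, 'e) mgraph \<Rightarrow> bool" where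
  "certificate_of_order G C z H \<longleftrightarrow> certificate G C H \<and>
     (\<forall>T\<in>components H. fvs (induced H T) = card (C \<inter> T) \<and> card (C \<inter> T) \<le> z)"

definition z_antler :: "('v, 'e) mgraph \<Rightarrow> nat \<Rightarrow> 'v set \<Rightarrow> 'v set \<Rightarrow> bool" where
  "z_antler G z C F \<longleftrightarrow> antler G C F \<and>
     (\<exists>H. certificate_of_order (induced G (C \<union> F)) C z H)"

end

theory Submission
  imports Defs
begin

text \<open>
  Let H \<subseteq> G[C \<union> F] be a C-certificate of order z; the forest H - C falls into trees. Keep, for
  each c \<in> C, z trees joined to c by two edges, and for each pair {c, c'} \<subseteq> C, z + 1 trees
  adjacent to both; the pruned certificate is H restricted to C and the kept trees. If Y were a
  smaller feedback vertex set of it, then |Y \<inter> T| < |C \<inter> T| \<le> z on some component T of H, so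
  some cycle of H inside T avoids Y. Where this cycle runs through a discarded tree it enters and
  leaves the tree through C, either twice at one c or at c \<noteq> c'; the corresponding kept family is
  then full, and as Y meets fewer than z of its trees, one kept tree (respectively two) avoiding Y
  closes a cycle of the pruned certificate that misses Y. So C remains a minimum feedback vertex set
  of the pruned certificate, and the components of G[F] containing kept trees form F'. There are at
  most |C| z + (z + 1) |P| of them, P being the pairs with a common tree; both members of such a pair
  lie in one component of H, so each c belongs to at most z - 1 pairs and 2 |P| \<le> |C| (z - 1).
\<close>

section \<open>Multigraph basics\<close>

lemma induced_simps [simp]:
  "verts (induced G X) = verts G \<inter> X"
  "edges (induced G X) = {e \<in> edges G. endpts G e \<subseteq> X}"
  "endpts (induced G X) = endpts G"
  unfolding induced_def by simp_all

lemma induced_induced [simp]: "induced (induced G X) Y = induced G (X \<inter> Y)"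
  unfolding induced_def by auto

lemma wf_induced: "wf_mgraph G \<Longrightarrow> wf_mgraph (induced G X)"
  unfolding wf_mgraph_def by auto

lemma endpts_subset_verts: "wf_mgraph G \<Longrightarrow> e \<in> edges G \<Longrightarrow> endpts G e \<subseteq> verts G"
  unfolding wf_mgraph_def by blast

lemma endpts_eq_doubleton:
  assumes "wf_mgraph G" "e \<in> edges G" "u \<in> endpts G e" "v \<in> endpts G e" "u \<noteq> v"
  shows "endpts G e = {u, v}"
proof -
  have "finite (endpts G e)" "card (endpts G e) \<le> 2"
    using assms(1,2) unfolding wf_mgraph_def by (auto intro: finite_subset)
  moreover have "{u, v} \<subseteq> endpts G e" "card {u, v} = 2" using assms(3-5) by auto
  ultimately show ?thesis by (metis card_seteq)
qed

lemma adj_sym: "adj G u v \<Longrightarrow> adj G v u"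
  unfolding adj_def by blast

lemma adj_in_verts: "wf_mgraph G \<Longrightarrow> adj G u v \<Longrightarrow> u \<in> verts G \<and> v \<in> verts G"
  unfolding wf_mgraph_def adj_def by blast

lemma reachable_sym: "(adj G)\<^sup>*\<^sup>* u v \<Longrightarrow> (adj G)\<^sup>*\<^sup>* v u"
  by (induction rule: rtranclp_induct) (auto intro: converse_rtranclp_into_rtranclp adj_sym)

definition rem_edge :: "('v, 'e) mgraph \<Rightarrow> 'e \<Rightarrow> ('v, 'e) mgraph" where
  "rem_edge G e = G\<lparr>edges := edges G - {e}\<rparr>"

lemma rem_edge_simps [simp]:
  "verts (rem_edge G e) = verts G"
  "edges (rem_edge G e) = edges G - {e}"
  "endpts (rem_edge G e) = endpts G"
  unfolding rem_edge_def by simp_all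

lemma wf_rem_edge: "wf_mgraph G \<Longrightarrow> wf_mgraph (rem_edge G e)"
  unfolding wf_mgraph_def by auto

lemma subgraph_trans: "subgraph A B \<Longrightarrow> subgraph B G \<Longrightarrow> subgraph A G"
  unfolding subgraph_def by blast

lemma subgraph_induced_iff [simp]:
  "subgraph A (induced G X) \<longleftrightarrow> subgraph A G \<and> verts A \<subseteq> X"
  unfolding subgraph_def by fastforce

lemma subgraph_rem_edge_iff [simp]:
  "subgraph A (rem_edge G e) \<longleftrightarrow> subgraph A G \<and> e \<notin> edges A"
  unfolding subgraph_def by auto

lemma induced_subgraph: "wf_mgraph G \<Longrightarrow> subgraph (induced G X) G"
  unfolding subgraph_def wf_mgraph_def by auto

lemma induced_mono: "wf_mgraph G \<Longrightarrow> X \<subseteq> Y \<Longrightarrow> subgraph (induced G X) (induced G Y)"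
  using induced_subgraph by fastforce

lemma wf_subgraph: "wf_mgraph G \<Longrightarrow> subgraph H G \<Longrightarrow> wf_mgraph H"
  unfolding wf_mgraph_def subgraph_def by (auto intro: finite_subset)

lemma adj_subgraph: "subgraph A G \<Longrightarrow> adj A u v \<Longrightarrow> adj G u v"
  unfolding subgraph_def adj_def by auto

lemma reachable_subgraph: "subgraph A G \<Longrightarrow> (adj A)\<^sup>*\<^sup>* u v \<Longrightarrow> (adj G)\<^sup>*\<^sup>* u v"
  by (metis adj_subgraph mono_rtranclp)

definition component_of :: "('v, 'e) mgraph \<Rightarrow> 'v \<Rightarrow> 'v set" where
  "component_of G u = {v \<in> verts G. (adj G)\<^sup>*\<^sup>* u v}"

lemma components_eq_image: "components G = component_of G ` verts G"
  unfolding components_def component_of_def by auto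

lemma component_of_self: "u \<in> verts G \<Longrightarrow> u \<in> component_of G u"
  unfolding component_of_def by simp

lemma component_of_eq: "v \<in> component_of G u \<Longrightarrow> component_of G v = component_of G u"
  unfolding component_of_def by (auto intro: rtranclp_trans reachable_sym)

lemma component_of_in_components: "u \<in> verts G \<Longrightarrow> component_of G u \<in> components G"
  unfolding components_eq_image by simp

lemma components_eq_component_of: "T \<in> components G \<Longrightarrow> x \<in> T \<Longrightarrow> T = component_of G x"
  unfolding components_eq_image using component_of_eq by fastforce

lemma components_subset_verts: "T \<in> components G \<Longrightarrow> T \<subseteq> verts G"
  unfolding components_def by blast

lemma components_nonempty: "T \<in> components G \<Longrightarrow> T \<noteq> {}"
  unfolding components_eq_image using component_of_self by fastforce

lemma components_disjoint:
  "T \<in> components G \<Longrightarrow> T' \<in> components G \<Longrightarrow> x \<in> T \<Longrightarrow> x \<in> T' \<Longrightarrow> T = T'"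
  using components_eq_component_of by metis

lemma pairwise_disjnt_components: "pairwise disjnt (components G)"
  unfolding pairwise_def disjnt_def using components_disjoint by fastforce

lemma finite_components: "finite (verts G) \<Longrightarrow> finite (components G)"
  unfolding components_eq_image by simp

lemma components_adj_closed:
  "wf_mgraph G \<Longrightarrow> T \<in> components G \<Longrightarrow> x \<in> T \<Longrightarrow> adj G x y \<Longrightarrow> y \<in> T"
  using components_eq_component_of[of T G x] adj_in_verts[of G x y]
  unfolding component_of_def by (auto intro: rtranclp.rtrancl_into_rtrancl)

lemma components_reachable_induced:
  assumes "wf_mgraph G" "T \<in> components G" "a \<in> T" "b \<in> T"
  shows "(adj (induced G T))\<^sup>*\<^sup>* a b"
proof -
  have "(adj G)\<^sup>*\<^sup>* a b"
    using assms(2-4) components_eq_component_of[OF assms(2,3)] unfolding component_of_def by blast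
  then have "b \<in> T \<and> (adj (induced G T))\<^sup>*\<^sup>* a b"
  proof (induction rule: rtranclp_induct)
    case (step y x)
    then obtain e where e: "e \<in> edges G" "y \<in> endpts G e" "x \<in> endpts G e"
      unfolding adj_def by blast
    have "endpts G e \<subseteq> T"
      using e step.IH components_adj_closed[OF assms(1,2)] unfolding adj_def by blast
    then have "adj (induced G T) y x" using e unfolding adj_def by auto
    with step.IH \<open>endpts G e \<subseteq> T\<close> e(3) show ?case by (auto intro: rtranclp.rtrancl_into_rtrancl)
  qed (use assms(3) in simp)
  then show ?thesis ..
qed

lemma components_subgraph:
  assumes "wf_mgraph G" "subgraph A G" "T \<in> components A"
  obtains T' where "T' \<in> components G" "T \<subseteq> T'"
proof -
  obtain u where u: "u \<in> verts A" "T = component_of A u"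
    using assms(3) unfolding components_eq_image by blast
  have "u \<in> verts G" using u assms(2) unfolding subgraph_def by blast
  moreover have "component_of A u \<subseteq> component_of G u"
    using reachable_subgraph[OF assms(2)] assms(2) unfolding component_of_def subgraph_def by blast
  ultimately show thesis using that u component_of_in_components by metis
qed

lemma card_eq_sum_components:
  assumes "finite (verts G)" "X \<subseteq> verts G"
  shows "card X = (\<Sum>T\<in>components G. card (X \<inter> T))"
proof -
  have "X = (\<Union>T\<in>components G. X \<inter> T)"
    using assms(2) component_of_self component_of_in_components by fastforce
  then have "card X = card (\<Union>T\<in>components G. X \<inter> T)" by simp
  also have "\<dots> = (\<Sum>T\<in>components G. card (X \<inter> T))"
  proof (rule card_UN_disjoint)
    show "finite (components G)" using finite_components[OF assms(1)] .
    show "\<forall>T\<in>components G. finite (X \<inter> T)" using finite_subset[OF assms(2,1)] by blast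
    show "\<forall>T\<in>components G. \<forall>T'\<in>components G. T \<noteq> T' \<longrightarrow> X \<inter> T \<inter> (X \<inter> T') = {}"
      using components_disjoint[of _ G] by blast
  qed
  finally show ?thesis .
qed

lemma exists_component_card_less:
  assumes "finite (verts G)" "X \<subseteq> verts G" "Y \<subseteq> verts G" "card Y < card X"
  obtains T where "T \<in> components G" "card (Y \<inter> T) < card (X \<inter> T)"
proof (rule ccontr)
  assume "\<not> thesis"
  then have "(\<Sum>T\<in>components G. card (X \<inter> T)) \<le> (\<Sum>T\<in>components G. card (Y \<inter> T))"
    using that by (intro sum_mono) (meson not_le)
  then show False using assms card_eq_sum_components by (metis not_le)
qed

lemma is_cycle_verts: "is_cycle G vs es \<Longrightarrow> set vs \<subseteq> verts G"
  unfolding is_cycle_def by blast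

lemma is_cycle_adj:
  assumes "is_cycle G vs es" "i < length vs"
  shows "adj G (vs ! i) (vs ! (Suc i mod length vs))"
proof -
  have "es ! i \<in> edges G" "endpts G (es ! i) = {vs ! i, vs ! (Suc i mod length vs)}"
    using assms unfolding is_cycle_def by (auto dest: nth_mem)
  then show ?thesis unfolding adj_def by blast
qed

lemma is_cycle_endpts:
  assumes "is_cycle G vs es" "e \<in> set es"
  shows "endpts G e \<subseteq> set vs"
proof -
  obtain i where "i < length vs" "es ! i = e"
    using assms unfolding is_cycle_def by (metis in_set_conv_nth)
  moreover have "Suc i mod length vs < length vs" using \<open>i < length vs\<close> by (intro mod_less_divisor) linarith
  ultimately show ?thesis using assms(1) unfolding is_cycle_def by auto
qed

lemma is_cycle_induced_iff [simp]:
  "is_cycle (induced G X) vs es \<longleftrightarrow> is_cycle G vs es \<and> set vs \<subseteq> X"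
proof
  assume cyc: "is_cycle G vs es \<and> set vs \<subseteq> X"
  then have "endpts G e \<subseteq> X" if "e \<in> set es" for e
    using is_cycle_endpts[OF _ that] by (meson subset_trans)
  with cyc show "is_cycle (induced G X) vs es" unfolding is_cycle_def by auto
qed (unfold is_cycle_def induced_simps, blast)

lemma is_cycle_subgraph:
  assumes "subgraph A G" "is_cycle A vs es"
  shows "is_cycle G vs es"
proof -
  have "\<forall>i<length vs. es ! i \<in> edges A" using assms(2) unfolding is_cycle_def by auto
  then show ?thesis using assms unfolding is_cycle_def subgraph_def by auto
qed

lemma forest_subgraph: "forest G \<Longrightarrow> subgraph A G \<Longrightarrow> forest A"
  unfolding forest_def using is_cycle_subgraph by blast

lemma forest_induced_iff:
  "forest (induced G X) \<longleftrightarrow> (\<forall>vs es. is_cycle G vs es \<longrightarrow> \<not> set vs \<subseteq> X)"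
  unfolding forest_def by simp

lemma is_fvs_iff:
  "is_fvs G X \<longleftrightarrow> X \<subseteq> verts G \<and> (\<forall>vs es. is_cycle G vs es \<longrightarrow> set vs \<inter> X \<noteq> {})"
  unfolding is_fvs_def del_verts_def forest_induced_iff using is_cycle_verts by blast

lemma cyclic_change:
  assumes "a < n" "P a" "b < n" "\<not> P b"
  shows "\<exists>i<n. P i \<and> \<not> P (Suc i mod n)"
proof (rule ccontr)
  assume no_change: "\<not> ?thesis"
  have step: "P (Suc i mod n)" if "P (i mod n)" for i
  proof -
    have "i mod n < n" using assms(1) by simp
    then have "P (Suc (i mod n) mod n)" using no_change that by blast
    then show ?thesis by (simp add: mod_Suc_eq)
  qed
  have "P ((a + m) mod n)" for m
    by (induction m) (use assms(1,2) step in auto)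
  from this[of "b + n - a"] show False using assms by simp
qed

lemma cycle_in_component:
  assumes "wf_mgraph G" "is_cycle G vs es" "T \<in> components G" "set vs \<inter> T \<noteq> {}"
  shows "set vs \<subseteq> T"
proof (rule ccontr)
  assume "\<not> set vs \<subseteq> T"
  then obtain a b where "a < length vs" "vs ! a \<in> T" "b < length vs" "vs ! b \<notin> T"
    using assms(4) by (metis disjoint_iff in_set_conv_nth subsetI)
  then obtain i where "i < length vs" "vs ! i \<in> T" "vs ! (Suc i mod length vs) \<notin> T"
    using cyclic_change[of a "length vs" "\<lambda>i. vs ! i \<in> T"] by blast
  then show False using components_adj_closed[OF assms(1,3)] is_cycle_adj[OF assms(2)] by blast
qed

lemma cycle_leaves_set:
  assumes "is_cycle G vs es" "set vs \<inter> S \<noteq> {}" "\<not> set vs \<subseteq> S"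
  obtains e1 e2 x1 y1 x2 y2 where "e1 \<in> set es" "e2 \<in> set es" "e1 \<noteq> e2"
    "endpts G e1 = {x1, y1}" "endpts G e2 = {x2, y2}" "x1 \<in> S" "x2 \<in> S" "y1 \<notin> S" "y2 \<notin> S"
proof -
  let ?n = "length vs" and ?next = "\<lambda>i. vs ! (Suc i mod length vs)"
  obtain a b where ab: "a < ?n" "vs ! a \<in> S" "b < ?n" "vs ! b \<notin> S"
    using assms(2,3) by (metis disjoint_iff in_set_conv_nth subsetI)
  obtain i where i: "i < ?n" "vs ! i \<in> S" "?next i \<notin> S"
    using cyclic_change[of a ?n "\<lambda>i. vs ! i \<in> S"] ab by blast
  obtain j where j: "j < ?n" "vs ! j \<notin> S" "?next j \<in> S"
    using cyclic_change[of b ?n "\<lambda>i. vs ! i \<notin> S"] ab by blast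
  have "length es = ?n" "distinct es" "\<And>k. k < ?n \<Longrightarrow> endpts G (es ! k) = {vs ! k, ?next k}"
    using assms(1) unfolding is_cycle_def by auto
  moreover have "i \<noteq> j" using i j by blast
  ultimately have "es ! i \<in> set es" "es ! j \<in> set es" "es ! i \<noteq> es ! j"
    "endpts G (es ! i) = {vs ! i, ?next i}" "endpts G (es ! j) = {?next j, vs ! j}"
    using i(1) j(1) by (auto simp: nth_eq_iff_index_eq insert_commute)
  with i j show thesis using that by blast
qed

definition is_path :: "('v, 'e) mgraph \<Rightarrow> 'v list \<Rightarrow> 'e list \<Rightarrow> bool" where
  "is_path G vs es \<longleftrightarrow> vs \<noteq> [] \<and> length es = length vs - 1 \<and> distinct vs \<and> set vs \<subseteq> verts G \<and>
     set es \<subseteq> edges G \<and> (\<forall>i<length es. endpts G (es ! i) = {vs ! i, vs ! Suc i})"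

lemma is_path_snoc:
  assumes p: "is_path G vs es" and x: "x \<in> verts G" "x \<notin> set vs"
    and e: "e \<in> edges G" "endpts G e = {last vs, x}"
  shows "is_path G (vs @ [x]) (es @ [e])"
proof -
  have ne: "vs \<noteq> []" and le: "length es = length vs - 1" using p unfolding is_path_def by auto
  have "endpts G ((es @ [e]) ! i) = {(vs @ [x]) ! i, (vs @ [x]) ! Suc i}"
    if "i < length (es @ [e])" for i
  proof (cases "i < length es")
    case True
    then show ?thesis using p le unfolding is_path_def by (auto simp: nth_append)
  next
    case False
    then have "i = length es" using that by simp
    then show ?thesis using e(2) le ne by (auto simp: nth_append last_conv_nth)
  qed
  then show ?thesis using p le ne x e(1) unfolding is_path_def by auto
qed

lemma reachable_path:
  assumes wf: "wf_mgraph G" and "(adj G)\<^sup>*\<^sup>* v w" and v: "v \<in> verts G"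
  shows "\<exists>vs es. is_path G vs es \<and> hd vs = v \<and> last vs = w"
  using assms(2)
proof (induction rule: rtranclp_induct)
  case base
  show ?case by (rule exI[of _ "[v]"], rule exI[of _ "[]"]) (simp add: is_path_def v)
next
  case (step w x)
  obtain vs es where p: "is_path G vs es" "hd vs = v" "last vs = w" using step.IH by blast
  obtain e where e: "e \<in> edges G" "w \<in> endpts G e" "x \<in> endpts G e"
    using step.hyps(2) unfolding adj_def by blast
  have ne: "vs \<noteq> []" and le: "length es = length vs - 1" using p unfolding is_path_def by auto
  show ?case
  proof (cases "x \<in> set vs")
    case True
    then obtain j where j: "j < length vs" "vs ! j = x" by (auto simp: in_set_conv_nth)
    have "is_path G (take (Suc j) vs) (take j es)"
      using p j le unfolding is_path_def by (auto simp: min_def dest: in_set_takeD)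
    moreover have "hd (take (Suc j) vs) = v" using p ne by (simp add: hd_conv_nth)
    moreover have "last (take (Suc j) vs) = x" using j by (simp add: take_Suc_conv_app_nth)
    ultimately show ?thesis by blast
  next
    case False
    then have "w \<noteq> x" using p ne by auto
    then have "endpts G e = {last vs, x}" using endpts_eq_doubleton[OF wf e] p(3) by blast
    then have "is_path G (vs @ [x]) (es @ [e])"
      using is_path_snoc[OF p(1) _ False e(1)] endpts_subset_verts[OF wf e(1)] e(3) by blast
    moreover have "hd (vs @ [x]) = v" using p ne by simp
    ultimately show ?thesis by (metis last_snoc)
  qed
qed

lemma is_path_distinct_edges:
  assumes "is_path G vs es"
  shows "distinct es"
proof -
  have d: "distinct vs" and l: "length es = length vs - 1"
    and ep: "\<forall>i<length es. endpts G (es ! i) = {vs ! i, vs ! Suc i}"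
    using assms unfolding is_path_def by auto
  show ?thesis
  proof (rule distinct_conv_nth[THEN iffD2], intro allI impI notI)
    fix i j assume ij: "i < length es" "j < length es" "i \<noteq> j" "es ! i = es ! j"
    then have "{vs ! i, vs ! Suc i} = {vs ! j, vs ! Suc j}" using ep by metis
    moreover have "Suc i < length vs" "Suc j < length vs" using ij l by auto
    ultimately show False using d ij by (auto simp: doubleton_eq_iff nth_eq_iff_index_eq)
  qed
qed

lemma exists_cycle_if_reachable_without_edge:
  assumes wf: "wf_mgraph G" and e: "e \<in> edges G" "endpts G e = {u, v}" "u \<noteq> v"
    and reach: "(adj (rem_edge G e))\<^sup>*\<^sup>* v u"
  shows "\<exists>vs es. is_cycle G vs es"
proof -
  have "v \<in> verts G" using endpts_subset_verts[OF wf e(1)] e(2) by blast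
  then obtain vs es where p: "is_path (rem_edge G e) vs es" "hd vs = v" "last vs = u"
    using reachable_path[OF wf_rem_edge[OF wf] reach] by auto
  have ne: "vs \<noteq> []" and le: "length es = length vs - 1" and d: "distinct vs"
    and sv: "set vs \<subseteq> verts G" and se: "set es \<subseteq> edges G - {e}"
    and ep: "\<forall>i<length es. endpts G (es ! i) = {vs ! i, vs ! Suc i}"
    using p unfolding is_path_def by auto
  have h0: "vs ! 0 = v" and hl: "vs ! length es = u"
    using p ne le by (auto simp: hd_conv_nth last_conv_nth)
  then have lv: "Suc (length es) = length vs" using le ne e(3) by (cases vs) auto
  have "endpts G ((es @ [e]) ! i) = {vs ! i, vs ! ((i + 1) mod length vs)}" if "i < length vs" for i
  proof (cases "i < length es")
    case True
    then show ?thesis using ep lv by (auto simp: nth_append)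
  next
    case False
    then have "i = length es" using that lv by simp
    then show ?thesis using e(2) hl h0 lv by (auto simp: nth_append)
  qed
  then have "is_cycle G vs (es @ [e])"
    using ne lv d sv se e(1) is_path_distinct_edges[OF p(1)] unfolding is_cycle_def by auto
  then show ?thesis by blast
qed

lemma exists_cycle_through_vertex:
  assumes wf: "wf_mgraph G" and X: "c \<notin> X" "a \<in> X" "b \<in> X"
    and e: "e1 \<in> edges G" "e2 \<in> edges G" "e1 \<noteq> e2" "endpts G e1 = {c, a}" "endpts G e2 = {c, b}"
    and reach: "(adj (induced G X))\<^sup>*\<^sup>* a b"
  shows "\<exists>vs es. is_cycle G vs es \<and> set vs \<subseteq> insert c X"
proof -
  let ?R = "rem_edge (induced G (insert c X)) e1"
  have "subgraph (induced G X) ?R" using induced_subgraph[OF wf] X e(4) by auto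
  then have "(adj ?R)\<^sup>*\<^sup>* a b" using reach by (rule reachable_subgraph)
  moreover have "adj ?R b c" using e X unfolding adj_def by auto
  ultimately have "(adj ?R)\<^sup>*\<^sup>* a c" by (rule rtranclp.rtrancl_into_rtrancl)
  then obtain vs es where "is_cycle (induced G (insert c X)) vs es"
    using exists_cycle_if_reachable_without_edge[OF wf_induced[OF wf, of "insert c X"], of e1 c a] e X by auto
  then show ?thesis by auto
qed

lemma fvs_le: "finite (verts G) \<Longrightarrow> is_fvs G X \<Longrightarrow> fvs G \<le> card X"
proof -
  assume "finite (verts G)" "is_fvs G X"
  moreover have "{card X | X. is_fvs G X} \<subseteq> {..card (verts G)}"
    using \<open>finite (verts G)\<close> unfolding is_fvs_def by (auto intro: card_mono)
  ultimately show ?thesis unfolding fvs_def by (auto intro: Min_le finite_subset)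
qed

lemma obtain_min_fvs:
  assumes "finite (verts G)"
  obtains X where "min_fvs G X"
proof -
  have "is_fvs G (verts G)" unfolding is_fvs_iff is_cycle_def by (auto simp: Int_absorb2)
  moreover have "{card X | X. is_fvs G X} \<subseteq> {..card (verts G)}"
    using assms unfolding is_fvs_def by (auto intro: card_mono)
  ultimately have "fvs G \<in> {card X | X. is_fvs G X}"
    unfolding fvs_def by (intro Min_in) (auto intro: finite_subset)
  then obtain X where "is_fvs G X" "card X = fvs G" by auto
  with that show thesis unfolding min_fvs_def by blast
qed

lemma fvs_mono:
  assumes "wf_mgraph G" "subgraph A G"
  shows "fvs A \<le> fvs G"
proof -
  have fin: "finite (verts G)" "finite (verts A)"
    using assms wf_subgraph unfolding wf_mgraph_def by blast+
  obtain X where X: "min_fvs G X" using obtain_min_fvs[OF fin(1)] by blast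
  have "is_fvs A (X \<inter> verts A)"
    using X is_cycle_subgraph[OF assms(2)] is_cycle_verts[of A]
    unfolding min_fvs_def is_fvs_iff by blast
  then have "fvs A \<le> card (X \<inter> verts A)" using fvs_le fin(2) by blast
  also have "\<dots> \<le> card X" using X fin(1) unfolding min_fvs_def is_fvs_def
    by (meson card_mono finite_subset inf_le1)
  finally show ?thesis using X unfolding min_fvs_def by simp
qed

lemma min_fvs_induced_component:
  assumes wf: "wf_mgraph G" and X: "min_fvs G X" and T: "T \<in> components G"
  shows "min_fvs (induced G T) (X \<inter> T)"
proof -
  have fin: "finite (verts G)" "finite X"
    using wf X unfolding wf_mgraph_def min_fvs_def is_fvs_def by (auto intro: finite_subset)
  have fvs_T: "is_fvs (induced G T) (X \<inter> T)"
    using X unfolding min_fvs_def is_fvs_iff by auto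
  obtain X0 where X0: "min_fvs (induced G T) X0" using obtain_min_fvs[of "induced G T"] fin(1) by auto
  have "is_fvs G ((X - T) \<union> X0)"
    unfolding is_fvs_iff
  proof (intro conjI allI impI)
    show "X - T \<union> X0 \<subseteq> verts G" using X X0 unfolding min_fvs_def is_fvs_def by auto
    fix vs es assume cyc: "is_cycle G vs es"
    show "set vs \<inter> (X - T \<union> X0) \<noteq> {}"
    proof (cases "set vs \<inter> T = {}")
      case True
      then show ?thesis using cyc X unfolding min_fvs_def is_fvs_iff by blast
    next
      case False
      then have "is_cycle (induced G T) vs es" using cycle_in_component[OF wf cyc T] cyc by simp
      then show ?thesis using X0 unfolding min_fvs_def is_fvs_iff by blast
    qed
  qed
  then have "card X \<le> card (X - T) + card X0"
    using X fvs_le[OF fin(1)] card_Un_le[of "X - T" X0] unfolding min_fvs_def by fastforce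
  moreover have "card X = card (X - T) + card (X \<inter> T)"
    using card_Int_Diff[OF fin(2), of T] by simp
  moreover have "fvs (induced G T) \<le> card (X \<inter> T)" using fvs_le[of "induced G T"] fvs_T fin(1) by simp
  ultimately show ?thesis using fvs_T X0 unfolding min_fvs_def by simp
qed

lemma components_induced_subset: "T \<in> components (induced G X) \<Longrightarrow> T \<subseteq> X"
  using components_subset_verts by fastforce

lemma components_induced_Union:
  assumes wf: "wf_mgraph G" and SS: "SS \<subseteq> components (induced G F)"
  shows "components (induced G (\<Union>SS)) = SS"
proof -
  have SS_F: "\<Union>SS \<subseteq> F" using SS components_induced_subset by blast
  have comp: "component_of (induced G (\<Union>SS)) u = S" if S: "S \<in> SS" "u \<in> S" for S u
  proof
    have SF: "S \<in> components (induced G F)" using SS S(1) by blast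
    then have S_verts: "S \<subseteq> verts G" using components_subset_verts by fastforce
    show "component_of (induced G (\<Union>SS)) u \<subseteq> S"
    proof
      fix v assume "v \<in> component_of (induced G (\<Union>SS)) u"
      then have "v \<in> verts (induced G F)" "(adj (induced G F))\<^sup>*\<^sup>* u v"
        using SS_F reachable_subgraph[OF induced_mono[OF wf SS_F]] unfolding component_of_def by auto
      then show "v \<in> S" using components_eq_component_of[OF SF S(2)] unfolding component_of_def by blast
    qed
    have sub: "subgraph (induced (induced G F) S) (induced G (\<Union>SS))"
      unfolding induced_induced using S by (intro induced_mono[OF wf]) blast
    have "(adj (induced G (\<Union>SS)))\<^sup>*\<^sup>* u v" if "v \<in> S" for v
      using reachable_subgraph[OF sub components_reachable_induced[OF wf_induced[OF wf] SF S(2) that]] .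
    then show "S \<subseteq> component_of (induced G (\<Union>SS)) u"
      using S_verts S unfolding component_of_def by auto
  qed
  show ?thesis
  proof
    show "components (induced G (\<Union>SS)) \<subseteq> SS"
      unfolding components_eq_image using comp by auto
    show "SS \<subseteq> components (induced G (\<Union>SS))"
    proof
      fix S assume S: "S \<in> SS"
      then obtain u where "u \<in> S" using SS components_nonempty by blast
      moreover have "S \<subseteq> verts G" using S SS components_subset_verts by fastforce
      ultimately show "S \<in> components (induced G (\<Union>SS))"
        using comp[OF S] component_of_in_components[of u "induced G (\<Union>SS)"] S by auto
    qed
  qed
qed

lemma FVC_Union_components:
  assumes wf: "wf_mgraph G" and fvc: "FVC G C F" and SS: "SS \<subseteq> components (induced G F)"
  shows "FVC G C (\<Union>SS)"
proof -
  have SS_F: "\<Union>SS \<subseteq> F" using SS components_induced_subset by blast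
  have "e_between G T (verts G - (C \<union> \<Union>SS)) \<le> 1" if T: "T \<in> SS" for T
  proof -
    have TF: "T \<in> components (induced G F)" using T SS by blast
    have "x \<notin> F" if e: "e \<in> edges G" "s \<in> endpts G e" "s \<in> T" "x \<in> endpts G e" "x \<notin> \<Union>SS"
      for e s x
    proof
      assume "x \<in> F"
      have "endpts G e = {s, x}" using endpts_eq_doubleton[OF wf e(1,2,4)] e(3,5) T by blast
      moreover have "s \<in> F" using e(3) T SS_F by blast
      ultimately have "adj (induced G F) s x"
        using e \<open>x \<in> F\<close> unfolding adj_def by auto
      then show False using e T components_adj_closed[OF wf_induced[OF wf] TF] by blast
    qed
    then have "{e \<in> edges G. endpts G e \<inter> T \<noteq> {} \<and> endpts G e \<inter> (verts G - (C \<union> \<Union>SS)) \<noteq> {}}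
      \<subseteq> {e \<in> edges G. endpts G e \<inter> T \<noteq> {} \<and> endpts G e \<inter> (verts G - (C \<union> F)) \<noteq> {}}"
      by blast
    then have "e_between G T (verts G - (C \<union> \<Union>SS)) \<le> e_between G T (verts G - (C \<union> F))"
      using wf unfolding e_between_def wf_mgraph_def by (simp add: card_mono)
    then show ?thesis using fvc TF unfolding FVC_def by fastforce
  qed
  moreover have "forest (induced G (\<Union>SS))"
    using fvc forest_subgraph[OF _ induced_mono[OF wf SS_F]] unfolding FVC_def by blast
  ultimately show ?thesis
    using fvc SS_F unfolding FVC_def components_induced_Union[OF wf SS] by blast
qed

lemma components_cover:
  assumes wf: "wf_mgraph G" and A: "subgraph A (induced G F)"
    and KK: "KK \<subseteq> components A" "finite KK"
  obtains SS where "SS \<subseteq> components (induced G F)" "\<Union>KK \<subseteq> \<Union>SS" "card SS \<le> card KK"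
proof
  let ?SS = "{S \<in> components (induced G F). \<exists>K\<in>KK. K \<subseteq> S}"
  have cover: "\<exists>S\<in>components (induced G F). K \<subseteq> S" if "K \<in> KK" for K
    using components_subgraph[OF wf_induced[OF wf] A, of K] KK that by (metis subsetD)
  show "\<Union>KK \<subseteq> \<Union>?SS"
  proof
    fix x assume "x \<in> \<Union>KK"
    then obtain K where K: "K \<in> KK" "x \<in> K" by blast
    with cover obtain S where "S \<in> components (induced G F)" "K \<subseteq> S" by blast
    with K show "x \<in> \<Union>?SS" by blast
  qed
  show "card ?SS \<le> card KK"
  proof (rule card_le_if_inj_on_rel[where r = "\<lambda>S K. K \<subseteq> S"])
    fix S1 S2 K assume "S1 \<in> ?SS" "S2 \<in> ?SS" "K \<in> KK" "K \<subseteq> S1" "K \<subseteq> S2"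
    moreover obtain x where "x \<in> K" using KK \<open>K \<in> KK\<close> components_nonempty by blast
    ultimately show "S1 = S2" using components_disjoint[of S1 "induced G F" S2 x] by blast
  qed (use KK in auto)
qed auto

lemma z_antlerI:
  assumes wf: "wf_mgraph G" and fvc: "FVC G C F"
    and cert: "certificate_of_order (induced G (C \<union> F)) C z H"
  shows "z_antler G z C F"
proof -
  have "card C = fvs H" "subgraph H (induced G (C \<union> F))"
    using cert unfolding certificate_of_order_def certificate_def min_fvs_def by auto
  then have "card C \<le> fvs (induced G (C \<union> F))" using fvs_mono[OF wf_induced[OF wf]] by simp
  then show ?thesis using fvc cert unfolding z_antler_def antler_def by blast
qed

section \<open>Pruning a certificate\<close>

definition choose_upto :: "nat \<Rightarrow> 'a set \<Rightarrow> 'a set" where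
  "choose_upto n A = (SOME B. B \<subseteq> A \<and> card B = min (card A) n)"

lemma choose_upto_spec: "choose_upto n A \<subseteq> A \<and> card (choose_upto n A) = min (card A) n"
proof -
  obtain B where "B \<subseteq> A" "card B = min (card A) n"
    using obtain_subset_with_card_n[of "min (card A) n" A] by auto
  then have "\<exists>B. B \<subseteq> A \<and> card B = min (card A) n" by blast
  then show ?thesis unfolding choose_upto_def by (rule someI_ex)
qed

lemma choose_upto_subset: "choose_upto n A \<subseteq> A"
  using choose_upto_spec by (rule conjunct1)

lemma card_choose_upto: "card (choose_upto n A) = min (card A) n"
  using choose_upto_spec by (rule conjunct2)

lemma card_choose_upto_eq:
  assumes "finite A" "x \<in> A" "x \<notin> choose_upto n A"
  shows "card (choose_upto n A) = n"
proof (rule ccontr)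
  assume "card (choose_upto n A) \<noteq> n"
  then have "card (choose_upto n A) = card A" using card_choose_upto[of n A] by linarith
  then have "choose_upto n A = A" using card_subset_eq[OF assms(1) choose_upto_subset] by blast
  then show False using assms(2,3) by simp
qed

lemma card_le_card_avoiding:
  assumes "pairwise disjnt KK" "finite KK" "finite Y"
  shows "card KK \<le> card {K \<in> KK. K \<inter> Y = {}} + card Y"
proof -
  have "card {K \<in> KK. K \<inter> Y \<noteq> {}} \<le> card Y"
  proof (rule card_le_if_inj_on_rel[where r = "\<lambda>K y. y \<in> K"])
    fix K1 K2 y assume "K1 \<in> {K \<in> KK. K \<inter> Y \<noteq> {}}" "K2 \<in> {K \<in> KK. K \<inter> Y \<noteq> {}}" "y \<in> K1" "y \<in> K2"
    then show "K1 = K2" using assms(1) unfolding pairwise_def disjnt_def by blast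
  qed (use assms(3) in auto)
  moreover have "card KK = card {K \<in> KK. K \<inter> Y = {}} + card {K \<in> KK. K \<inter> Y \<noteq> {}}"
  proof -
    have "card ({K \<in> KK. K \<inter> Y = {}} \<union> {K \<in> KK. K \<inter> Y \<noteq> {}}) =
        card {K \<in> KK. K \<inter> Y = {}} + card {K \<in> KK. K \<inter> Y \<noteq> {}}"
      by (rule card_Un_disjoint) (use assms(2) in auto)
    moreover have "{K \<in> KK. K \<inter> Y = {}} \<union> {K \<in> KK. K \<inter> Y \<noteq> {}} = KK" by blast
    ultimately show ?thesis by simp
  qed
  ultimately show ?thesis by linarith
qed

locale fvs_certificate =
  fixes H :: "('v, 'e) mgraph" and C :: "'v set" and z :: nat
  assumes wf: "wf_mgraph H" and fvs_C: "is_fvs H C"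
    and order: "\<And>T. T \<in> components H \<Longrightarrow> fvs (induced H T) = card (C \<inter> T) \<and> card (C \<inter> T) \<le> z"
begin

definition trees :: "'v set set" where
  "trees = components (del_verts H C)"

definition double_trees :: "'v \<Rightarrow> 'v set set" where
  "double_trees c = {K \<in> trees. \<exists>e1\<in>edges H. \<exists>e2\<in>edges H. e1 \<noteq> e2 \<and>
     c \<in> endpts H e1 \<and> c \<in> endpts H e2 \<and> endpts H e1 \<inter> K \<noteq> {} \<and> endpts H e2 \<inter> K \<noteq> {}}"

definition common_trees :: "'v set \<Rightarrow> 'v set set" where
  "common_trees p = {K \<in> trees. \<forall>c\<in>p. \<exists>e\<in>edges H. c \<in> endpts H e \<and> endpts H e \<inter> K \<noteq> {}}"

definition pairs :: "'v set set" where
  "pairs = {p. p \<subseteq> C \<and> card p = 2}"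

definition kept :: "'v set set" where
  "kept = (\<Union>c\<in>C. choose_upto z (double_trees c)) \<union> (\<Union>p\<in>pairs. choose_upto (Suc z) (common_trees p))"

definition pruned :: "('v, 'e) mgraph" where
  "pruned = induced H (C \<union> \<Union>kept)"

lemma finite_verts: "finite (verts H)"
  using wf unfolding wf_mgraph_def by blast

lemma C_subset: "C \<subseteq> verts H"
  using fvs_C unfolding is_fvs_def by blast

lemma finite_C: "finite C"
  using C_subset finite_verts finite_subset by blast

lemma cycle_meets_C: "is_cycle H vs es \<Longrightarrow> set vs \<inter> C \<noteq> {}"
  using fvs_C unfolding is_fvs_iff by blast

lemma trees_subset: "K \<in> trees \<Longrightarrow> K \<subseteq> verts H - C"
  unfolding trees_def del_verts_def using components_induced_subset by blast

lemma finite_trees: "finite trees"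
  using finite_components[of "del_verts H C"] finite_verts unfolding trees_def del_verts_def by simp

lemma pairwise_disjnt_trees: "pairwise disjnt trees"
  unfolding trees_def by (rule pairwise_disjnt_components)

lemma tree_reachable:
  assumes "K \<in> trees" "a \<in> K" "b \<in> K"
  shows "(adj (induced H K))\<^sup>*\<^sup>* a b"
proof -
  have "induced (del_verts H C) K = induced H K"
    using trees_subset[OF assms(1)] unfolding del_verts_def by (simp add: Int_absorb1)
  then show ?thesis
    using components_reachable_induced[of "del_verts H C" K a b] assms wf
    unfolding trees_def del_verts_def by (simp add: wf_induced)
qed

lemma tree_edge_leaving:
  assumes K: "K \<in> trees" "x \<in> K" and e: "e \<in> edges H" "x \<in> endpts H e" "y \<in> endpts H e" "y \<notin> K"
  shows "y \<in> C"
proof (rule ccontr)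
  assume "y \<notin> C"
  have "endpts H e = {x, y}" using endpts_eq_doubleton[OF wf e(1-3)] K e(4) by blast
  then have "endpts H e \<subseteq> verts H - C"
    using \<open>y \<notin> C\<close> trees_subset[OF K(1)] K(2) endpts_subset_verts[OF wf e(1)] by auto
  then have "adj (del_verts H C) x y" using e unfolding adj_def del_verts_def by auto
  then show False
    using components_adj_closed[OF wf_induced[OF wf]] K e(4) unfolding trees_def del_verts_def by blast
qed

lemma tree_subset_component:
  assumes K: "K \<in> trees" and e: "e \<in> edges H" "c \<in> endpts H e" "endpts H e \<inter> K \<noteq> {}"
  shows "K \<subseteq> component_of H c"
proof
  fix v assume "v \<in> K"
  obtain a where a: "a \<in> endpts H e" "a \<in> K" using e by blast
  have "adj H c a" using e a unfolding adj_def by blast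
  moreover have "(adj H)\<^sup>*\<^sup>* a v"
    using reachable_subgraph[OF induced_subgraph[OF wf] tree_reachable[OF K a(2) \<open>v \<in> K\<close>]] .
  ultimately have "(adj H)\<^sup>*\<^sup>* c v" by (rule converse_rtranclp_into_rtranclp)
  then show "v \<in> component_of H c"
    using \<open>v \<in> K\<close> trees_subset[OF K] unfolding component_of_def by blast
qed

lemma double_tree_cycle:
  assumes K: "K \<in> double_trees c" and c: "c \<in> C"
  shows "\<exists>vs es. is_cycle H vs es \<and> set vs \<subseteq> insert c K"
proof -
  obtain e1 e2 a b where e: "e1 \<in> edges H" "e2 \<in> edges H" "e1 \<noteq> e2" "c \<in> endpts H e1" "c \<in> endpts H e2"
    and ab: "a \<in> endpts H e1" "a \<in> K" "b \<in> endpts H e2" "b \<in> K"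
    using K unfolding double_trees_def by blast
  have KT: "K \<in> trees" using K unfolding double_trees_def by blast
  then have "c \<notin> K" using c trees_subset by blast
  then have "endpts H e1 = {c, a}" "endpts H e2 = {c, b}"
    using endpts_eq_doubleton[OF wf e(1,4) ab(1)] endpts_eq_doubleton[OF wf e(2,5) ab(3)] ab by blast+
  then show ?thesis
    using exists_cycle_through_vertex[OF wf \<open>c \<notin> K\<close> ab(2,4) e(1-3)] tree_reachable[OF KT ab(2,4)]
    by blast
qed

lemma common_trees_edge:
  assumes "K \<in> common_trees p" "c \<in> p" "c \<in> C"
  obtains e a where "e \<in> edges H" "endpts H e = {c, a}" "a \<in> K"
proof -
  obtain e a where e: "e \<in> edges H" "c \<in> endpts H e" "a \<in> endpts H e" "a \<in> K"
    using assms(1,2) unfolding common_trees_def by blast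
  have "K \<in> trees" using assms(1) unfolding common_trees_def by blast
  then have "c \<noteq> a" using trees_subset e(4) assms(3) by blast
  then show thesis by (rule that[OF e(1) endpts_eq_doubleton[OF wf e(1-3)] e(4)])
qed

lemma common_trees_cycle:
  assumes K: "K1 \<in> common_trees {c, c'}" "K2 \<in> common_trees {c, c'}" "K1 \<noteq> K2"
    and c: "c \<in> C" "c' \<in> C" "c \<noteq> c'"
  shows "\<exists>vs es. is_cycle H vs es \<and> set vs \<subseteq> {c, c'} \<union> K1 \<union> K2"
proof -
  have KT: "K1 \<in> trees" "K2 \<in> trees" using K unfolding common_trees_def by blast+
  have notin: "c \<notin> K1" "c \<notin> K2" "c' \<notin> K1" "c' \<notin> K2"
    using trees_subset[OF KT(1)] trees_subset[OF KT(2)] c by blast+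
  obtain e1 a1 where e1: "e1 \<in> edges H" "endpts H e1 = {c, a1}" "a1 \<in> K1"
    using common_trees_edge[OF K(1) _ c(1)] by blast
  obtain f1 b1 where f1: "f1 \<in> edges H" "endpts H f1 = {c', b1}" "b1 \<in> K1"
    using common_trees_edge[OF K(1) _ c(2)] by blast
  obtain e2 a2 where e2: "e2 \<in> edges H" "endpts H e2 = {c, a2}" "a2 \<in> K2"
    using common_trees_edge[OF K(2) _ c(1)] by blast
  obtain f2 b2 where f2: "f2 \<in> edges H" "endpts H f2 = {c', b2}" "b2 \<in> K2"
    using common_trees_edge[OF K(2) _ c(2)] by blast
  have "a1 \<noteq> a2"
    using components_disjoint[of K1 "del_verts H C" K2 a1] KT K(3) e1(3) e2(3) unfolding trees_def by blast
  then have "e1 \<noteq> e2" using e1(2) e2(2) notin e1(3) by (auto simp: doubleton_eq_iff)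
  let ?X = "insert c' (K1 \<union> K2)"
  have sub: "subgraph (induced H K1) (induced H ?X)" "subgraph (induced H K2) (induced H ?X)"
    using induced_mono[OF wf] by auto
  have r: "(adj (induced H ?X))\<^sup>*\<^sup>* a1 b1" "(adj (induced H ?X))\<^sup>*\<^sup>* b2 a2"
    using reachable_subgraph[OF sub(1) tree_reachable[OF KT(1) e1(3) f1(3)]]
      reachable_subgraph[OF sub(2) tree_reachable[OF KT(2) f2(3) e2(3)]] .
  have s: "adj (induced H ?X) b1 c'" "adj (induced H ?X) c' b2"
    using f1 f2 unfolding adj_def by (auto intro!: bexI[of _ f1] bexI[of _ f2])
  have reach: "(adj (induced H ?X))\<^sup>*\<^sup>* a1 a2"
    using rtranclp.rtrancl_into_rtrancl[OF r(1) s(1)] converse_rtranclp_into_rtranclp[OF s(2) r(2)]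
    by (rule rtranclp_trans)
  have X: "c \<notin> ?X" "a1 \<in> ?X" "a2 \<in> ?X" using notin c(3) e1(3) e2(3) by blast+
  obtain vs es where cyc: "is_cycle H vs es" and "set vs \<subseteq> insert c ?X"
    using exists_cycle_through_vertex[OF wf X e1(1) e2(1) \<open>e1 \<noteq> e2\<close> e1(2) e2(2) reach] by blast
  then have "set vs \<subseteq> {c, c'} \<union> K1 \<union> K2" by blast
  with cyc show ?thesis by blast
qed

lemma double_trees_subset: "double_trees c \<subseteq> trees"
  unfolding double_trees_def by blast

lemma common_trees_subset: "common_trees p \<subseteq> trees"
  unfolding common_trees_def by blast

lemma double_trees_subset_component:
  assumes "K \<in> double_trees c"
  shows "K \<subseteq> component_of H c"
proof -
  obtain e where "K \<in> trees" "e \<in> edges H" "c \<in> endpts H e" "endpts H e \<inter> K \<noteq> {}"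
    using assms unfolding double_trees_def by blast
  then show ?thesis by (rule tree_subset_component)
qed

lemma common_trees_subset_component:
  assumes "K \<in> common_trees p" "c \<in> p"
  shows "K \<subseteq> component_of H c"
proof -
  obtain e where "K \<in> trees" "e \<in> edges H" "c \<in> endpts H e" "endpts H e \<inter> K \<noteq> {}"
    using assms unfolding common_trees_def by blast
  then show ?thesis by (rule tree_subset_component)
qed

lemma kept_subset_trees: "kept \<subseteq> trees"
proof -
  have "choose_upto z (double_trees c) \<subseteq> trees" "choose_upto (Suc z) (common_trees p) \<subseteq> trees" for c p
    using subset_trans[OF choose_upto_subset double_trees_subset]
      subset_trans[OF choose_upto_subset common_trees_subset] .
  then show ?thesis unfolding kept_def by blast
qed

lemma finite_kept: "finite kept"
  using finite_subset[OF kept_subset_trees finite_trees] .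

lemma card_trees_lt_avoiding:
  assumes KK: "KK \<subseteq> trees" "\<And>K. K \<in> KK \<Longrightarrow> K \<subseteq> T" and Y: "finite Y" "card (Y \<inter> T) < z"
  shows "card KK < card {K \<in> KK. K \<inter> Y = {}} + z"
proof -
  have "card KK \<le> card {K \<in> KK. K \<inter> (Y \<inter> T) = {}} + card (Y \<inter> T)"
    using card_le_card_avoiding[OF pairwise_subset[OF pairwise_disjnt_trees KK(1)]
        finite_subset[OF KK(1) finite_trees], of "Y \<inter> T"] Y(1) by simp
  also have "{K \<in> KK. K \<inter> (Y \<inter> T) = {}} = {K \<in> KK. K \<inter> Y = {}}" using KK(2) by blast
  finally show ?thesis using Y(2) by linarith
qed

lemma double_tree_reroute:
  assumes K0: "K0 \<in> double_trees c" "K0 \<notin> kept" and c: "c \<in> C" "c \<in> T" "c \<notin> Y"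
    and T: "T \<in> components H" and Y: "finite Y" "card (Y \<inter> T) < z"
  shows "\<exists>vs es. is_cycle H vs es \<and> set vs \<subseteq> C \<union> \<Union>kept - Y"
proof -
  let ?KK = "choose_upto z (double_trees c)"
  have KK: "?KK \<subseteq> double_trees c" by (rule choose_upto_subset)
  have "K0 \<notin> ?KK" using K0(2) c(1) unfolding kept_def by blast
  then have "card ?KK = z"
    by (rule card_choose_upto_eq[OF finite_subset[OF double_trees_subset finite_trees] K0(1)])
  moreover have "card ?KK < card {K \<in> ?KK. K \<inter> Y = {}} + z"
  proof (rule card_trees_lt_avoiding[OF _ _ Y])
    show "?KK \<subseteq> trees" using KK double_trees_subset by (rule subset_trans)
    show "K \<subseteq> T" if "K \<in> ?KK" for K
      using double_trees_subset_component[of K c] KK that components_eq_component_of[OF T c(2)]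
      by blast
  qed
  ultimately have "card {K \<in> ?KK. K \<inter> Y = {}} \<noteq> 0" by linarith
  then obtain K where K: "K \<in> ?KK" "K \<inter> Y = {}" by (metis (mono_tags, lifting) card.empty empty_Collect_eq)
  then have "K \<in> double_trees c" using KK by blast
  then obtain vs es where "is_cycle H vs es" "set vs \<subseteq> insert c K"
    using double_tree_cycle c(1) by blast
  moreover have "K \<in> kept" using K(1) c(1) unfolding kept_def by blast
  ultimately show ?thesis using K(2) c by blast
qed

lemma common_trees_reroute:
  assumes K0: "K0 \<in> common_trees {c, c'}" "K0 \<notin> kept"
    and c: "c \<in> C" "c' \<in> C" "c \<noteq> c'" "c \<in> T" "c \<notin> Y" "c' \<notin> Y"
    and T: "T \<in> components H" and Y: "finite Y" "card (Y \<inter> T) < z"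
  shows "\<exists>vs es. is_cycle H vs es \<and> set vs \<subseteq> C \<union> \<Union>kept - Y"
proof -
  let ?KK = "choose_upto (Suc z) (common_trees {c, c'})"
  have KK: "?KK \<subseteq> common_trees {c, c'}" by (rule choose_upto_subset)
  have fin: "finite ?KK"
    using finite_subset[OF subset_trans[OF KK common_trees_subset] finite_trees] .
  have pair: "{c, c'} \<in> pairs" using c unfolding pairs_def by auto
  then have "K0 \<notin> ?KK" using K0(2) unfolding kept_def by blast
  then have "card ?KK = Suc z"
    by (rule card_choose_upto_eq[OF finite_subset[OF common_trees_subset finite_trees] K0(1)])
  moreover have "card ?KK < card {K \<in> ?KK. K \<inter> Y = {}} + z"
  proof (rule card_trees_lt_avoiding[OF _ _ Y])
    show "?KK \<subseteq> trees" using KK common_trees_subset by (rule subset_trans)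
    show "K \<subseteq> T" if "K \<in> ?KK" for K
      using common_trees_subset_component[of K "{c, c'}" c] KK that
        components_eq_component_of[OF T c(4)] by blast
  qed
  ultimately have "\<not> card {K \<in> ?KK. K \<inter> Y = {}} \<le> Suc 0" by linarith
  then obtain K1 K2 where K: "K1 \<in> ?KK" "K2 \<in> ?KK" "K1 \<noteq> K2" "K1 \<inter> Y = {}" "K2 \<inter> Y = {}"
    using card_le_Suc0_iff_eq[of "{K \<in> ?KK. K \<inter> Y = {}}"] fin by auto
  then have "K1 \<in> common_trees {c, c'}" "K2 \<in> common_trees {c, c'}" using KK by blast+
  then obtain vs es where cyc: "is_cycle H vs es" "set vs \<subseteq> {c, c'} \<union> K1 \<union> K2"
    using common_trees_cycle K(3) c(1-3) by blast
  have "K1 \<in> kept" "K2 \<in> kept" using K(1,2) pair unfolding kept_def by blast+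
  then have "{c, c'} \<union> K1 \<union> K2 \<subseteq> C \<union> \<Union>kept - Y" using K(4,5) c by blast
  with cyc show ?thesis by blast
qed

lemma cycle_reroute:
  assumes T: "T \<in> components H" and Y: "finite Y" "card (Y \<inter> T) < card (C \<inter> T)"
    and cyc: "is_cycle H vs es" "set vs \<subseteq> T" "set vs \<inter> Y = {}"
    and t: "t \<in> set vs" "t \<notin> C \<union> \<Union>kept"
  shows "\<exists>vs es. is_cycle H vs es \<and> set vs \<subseteq> C \<union> \<Union>kept - Y"
proof -
  have Yz: "card (Y \<inter> T) < z" using order[OF T] Y(2) by linarith
  define K0 where "K0 = component_of (del_verts H C) t"
  have "t \<in> verts H - C" using is_cycle_verts[OF cyc(1)] t by blast
  then have K0: "K0 \<in> trees" "t \<in> K0"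
    unfolding K0_def trees_def del_verts_def
    by (simp_all add: component_of_in_components component_of_self)
  have "set vs \<inter> K0 \<noteq> {}" using K0(2) t(1) by blast
  moreover have "\<not> set vs \<subseteq> K0" using cycle_meets_C[OF cyc(1)] trees_subset[OF K0(1)] by blast
  ultimately obtain e1 e2 x1 y1 x2 y2 where e: "e1 \<in> set es" "e2 \<in> set es" "e1 \<noteq> e2"
    "endpts H e1 = {x1, y1}" "endpts H e2 = {x2, y2}" "x1 \<in> K0" "x2 \<in> K0" "y1 \<notin> K0" "y2 \<notin> K0"
    by (rule cycle_leaves_set[OF cyc(1)])
  have eH: "e1 \<in> edges H" "e2 \<in> edges H" using e(1,2) cyc(1) unfolding is_cycle_def by blast+
  have y: "y1 \<in> C" "y2 \<in> C"
    using tree_edge_leaving[OF K0(1) e(6) eH(1)] tree_edge_leaving[OF K0(1) e(7) eH(2)] e(4,5,8,9)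
    by auto
  have "y1 \<in> set vs" "y2 \<in> set vs"
    using is_cycle_endpts[OF cyc(1) e(1)] is_cycle_endpts[OF cyc(1) e(2)] e(4,5) by auto
  then have y': "y1 \<in> T" "y1 \<notin> Y" "y2 \<notin> Y" using cyc(2,3) by blast+
  have "K0 \<notin> kept" using K0(2) t(2) by blast
  show ?thesis
  proof (cases "y1 = y2")
    case True
    then have "K0 \<in> double_trees y1" using K0(1) eH e unfolding double_trees_def by blast
    then show ?thesis by (rule double_tree_reroute[OF _ \<open>K0 \<notin> kept\<close> y(1) y'(1,2) T Y(1) Yz])
  next
    case False
    then have "K0 \<in> common_trees {y1, y2}" using K0(1) eH e unfolding common_trees_def by blast
    then show ?thesis
      by (rule common_trees_reroute[OF _ \<open>K0 \<notin> kept\<close> y False y'(1-3) T Y(1) Yz])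
  qed
qed

lemma pruned_subgraph: "subgraph pruned H"
  unfolding pruned_def by (rule induced_subgraph[OF wf])

lemma wf_pruned: "wf_mgraph pruned"
  unfolding pruned_def by (rule wf_induced[OF wf])

lemma card_le_card_fvs_pruned:
  assumes Y: "is_fvs pruned Y"
  shows "card C \<le> card Y"
proof (rule ccontr)
  assume "\<not> card C \<le> card Y"
  have Y_sub: "Y \<subseteq> verts H" using Y unfolding is_fvs_def pruned_def by auto
  have fin: "finite Y" using finite_subset[OF Y_sub finite_verts] .
  have "card Y < card C" using \<open>\<not> card C \<le> card Y\<close> by linarith
  then obtain T where T: "T \<in> components H" "card (Y \<inter> T) < card (C \<inter> T)"
    by (rule exists_component_card_less[OF finite_verts C_subset Y_sub])
  have "\<not> is_fvs (induced H T) (Y \<inter> T)"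
  proof
    assume "is_fvs (induced H T) (Y \<inter> T)"
    then have "fvs (induced H T) \<le> card (Y \<inter> T)" using fvs_le[of "induced H T"] finite_verts by simp
    then show False using order[OF T(1)] T(2) by linarith
  qed
  moreover have "Y \<inter> T \<subseteq> verts (induced H T)" using Y_sub by auto
  ultimately obtain vs es where "is_cycle (induced H T) vs es" "set vs \<inter> (Y \<inter> T) = {}"
    unfolding is_fvs_iff by blast
  then have cyc: "is_cycle H vs es" "set vs \<subseteq> T" "set vs \<inter> Y = {}" by auto
  have "\<exists>vs es. is_cycle H vs es \<and> set vs \<subseteq> C \<union> \<Union>kept - Y"
  proof (cases "set vs \<subseteq> C \<union> \<Union>kept")
    case True
    then have "set vs \<subseteq> C \<union> \<Union>kept - Y" using cyc(3) by blast
    with cyc(1) show ?thesis by blast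
  next
    case False
    then obtain t where "t \<in> set vs" "t \<notin> C \<union> \<Union>kept" by blast
    then show ?thesis by (rule cycle_reroute[OF T(1) fin T(2) cyc])
  qed
  then show False using Y unfolding pruned_def is_fvs_iff by auto
qed

lemma min_fvs_pruned: "min_fvs pruned C"
proof -
  have fin: "finite (verts pruned)" using finite_verts unfolding pruned_def by simp
  have C: "is_fvs pruned C" using C_subset cycle_meets_C unfolding pruned_def is_fvs_iff by auto
  obtain Y where "min_fvs pruned Y" using obtain_min_fvs[OF fin] by blast
  then have "card C \<le> fvs pruned" using card_le_card_fvs_pruned[of Y] unfolding min_fvs_def by simp
  then show ?thesis using C fvs_le[OF fin C] unfolding min_fvs_def by simp
qed

lemma pruned_order:
  assumes T: "T \<in> components pruned"
  shows "fvs (induced pruned T) = card (C \<inter> T) \<and> card (C \<inter> T) \<le> z"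
proof
  show "fvs (induced pruned T) = card (C \<inter> T)"
    using min_fvs_induced_component[OF wf_pruned min_fvs_pruned T] unfolding min_fvs_def by simp
  obtain T' where "T' \<in> components H" "T \<subseteq> T'"
    using components_subgraph[OF wf pruned_subgraph T] by blast
  then have "card (C \<inter> T) \<le> card (C \<inter> T')" using finite_C by (intro card_mono) auto
  then show "card (C \<inter> T) \<le> z" using order[OF \<open>T' \<in> components H\<close>] by linarith
qed

lemma certificate_of_order_pruned:
  assumes "subgraph H G" "C \<union> \<Union>kept \<subseteq> X"
  shows "certificate_of_order (induced G X) C z pruned"
proof -
  have "subgraph pruned (induced G X)"
    using subgraph_trans[OF pruned_subgraph assms(1)] assms(2) unfolding pruned_def by auto
  then show ?thesis
    unfolding certificate_of_order_def certificate_def using min_fvs_pruned pruned_order by blast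
qed

definition linked_pairs :: "'v set set" where
  "linked_pairs = {p \<in> pairs. common_trees p \<noteq> {}}"

lemma card_partners:
  assumes c: "c \<in> C"
  shows "card {p \<in> linked_pairs. c \<in> p} + 1 \<le> z"
proof -
  let ?T = "component_of H c"
  have cT: "c \<in> ?T" using component_of_self[of c H] c C_subset by blast
  have "{p \<in> linked_pairs. c \<in> p} \<subseteq> (\<lambda>c'. {c, c'}) ` (C \<inter> ?T - {c})"
  proof
    fix p assume "p \<in> {p \<in> linked_pairs. c \<in> p}"
    then have p: "p \<subseteq> C" "card p = 2" "c \<in> p" "common_trees p \<noteq> {}"
      unfolding linked_pairs_def pairs_def by auto
    then obtain x y where "p = {x, y}" "x \<noteq> y" by (meson card_2_iff)
    then obtain c' where c': "p = {c, c'}" "c' \<noteq> c" using p(3) by blast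
    then have "c' \<in> verts H" using p(1) C_subset by blast
    obtain K where K: "K \<in> common_trees p" using p(4) by blast
    then obtain x where "x \<in> K"
      using components_nonempty[of K "del_verts H C"] common_trees_subset unfolding trees_def by blast
    then have "x \<in> ?T" "x \<in> component_of H c'"
      using common_trees_subset_component[OF K] c'(1) by blast+
    then have "component_of H c' = ?T"
      using component_of_eq[of x H c] component_of_eq[of x H c'] by simp
    then have "c' \<in> ?T" using component_of_self[OF \<open>c' \<in> verts H\<close>] by simp
    then show "p \<in> (\<lambda>c'. {c, c'}) ` (C \<inter> ?T - {c})" using c' p(1) by blast
  qed
  then have "card {p \<in> linked_pairs. c \<in> p} \<le> card (C \<inter> ?T - {c})"
    using finite_C by (meson card_image_le card_mono finite_Diff finite_Int finite_imageI order_trans)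
  also have "\<dots> + 1 = card (C \<inter> ?T)"
  proof -
    have "C \<inter> ?T \<noteq> {}" using c cT by blast
    then have "0 < card (C \<inter> ?T)" using finite_C by (simp add: card_gt_0_iff)
    then show ?thesis using c cT by (simp add: card_Diff_singleton)
  qed
  also have "\<dots> \<le> z" using order[OF component_of_in_components[of c H]] c C_subset by blast
  finally show ?thesis by linarith
qed

lemma card_kept: "card kept \<le> card C * z + card linked_pairs * Suc z"
proof -
  have finQ: "finite linked_pairs"
    using finite_C unfolding linked_pairs_def pairs_def by (auto intro: finite_subset[of _ "Pow C"])
  have "card (\<Union>c\<in>C. choose_upto z (double_trees c)) \<le> (\<Sum>c\<in>C. card (choose_upto z (double_trees c)))"
    by (rule card_UN_le[OF finite_C])
  also have "\<dots> \<le> card C * z"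
    using sum_bounded_above[of C "\<lambda>c. card (choose_upto z (double_trees c))" z]
    by (simp add: card_choose_upto)
  finally have double: "card (\<Union>c\<in>C. choose_upto z (double_trees c)) \<le> card C * z" .
  have "choose_upto (Suc z) (common_trees p) = {}" if "common_trees p = {}" for p
    using choose_upto_subset[of "Suc z" "common_trees p"] that by blast
  then have "(\<Union>p\<in>pairs. choose_upto (Suc z) (common_trees p)) =
      (\<Union>p\<in>linked_pairs. choose_upto (Suc z) (common_trees p))"
    unfolding linked_pairs_def by blast
  also have "card \<dots> \<le> (\<Sum>p\<in>linked_pairs. card (choose_upto (Suc z) (common_trees p)))"
    by (rule card_UN_le[OF finQ])
  also have "\<dots> \<le> card linked_pairs * Suc z"
    using sum_bounded_above[of linked_pairs "\<lambda>p. card (choose_upto (Suc z) (common_trees p))" "Suc z"]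
    by (simp add: card_choose_upto)
  finally have common:
    "card (\<Union>p\<in>pairs. choose_upto (Suc z) (common_trees p)) \<le> card linked_pairs * Suc z" .
  have "card kept \<le> card (\<Union>c\<in>C. choose_upto z (double_trees c)) +
      card (\<Union>p\<in>pairs. choose_upto (Suc z) (common_trees p))"
    unfolding kept_def by (rule card_Un_le)
  with double common show ?thesis by linarith
qed

lemma card_linked_pairs: "2 * card linked_pairs + card C \<le> card C * z"
proof -
  let ?Q = linked_pairs
  have finQ: "finite ?Q"
    using finite_C unfolding linked_pairs_def pairs_def by (auto intro: finite_subset[of _ "Pow C"])
  have "(\<Sum>c\<in>C. card {p \<in> ?Q. c \<in> p}) = 2 * card ?Q"
  proof (rule sum_multicount[OF finite_C finQ], intro ballI)
    fix p assume "p \<in> ?Q"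
    then have "p \<subseteq> C" "card p = 2" unfolding linked_pairs_def pairs_def by auto
    moreover from this(1) have "{c \<in> C. c \<in> p} = p" by blast
    ultimately show "card {c \<in> C. c \<in> p} = 2" by simp
  qed
  moreover have "(\<Sum>c\<in>C. card {p \<in> ?Q. c \<in> p} + 1) \<le> card C * z"
    using sum_bounded_above[of C "\<lambda>c. card {p \<in> ?Q. c \<in> p} + 1" z] card_partners by simp
  moreover have "(\<Sum>c\<in>C. card {p \<in> ?Q. c \<in> p} + 1) = (\<Sum>c\<in>C. card {p \<in> ?Q. c \<in> p}) + card C"
    unfolding sum.distrib by simp
  ultimately show ?thesis by linarith
qed

lemma card_kept_le: "real (card kept) \<le> real (card C) / 2 * (real z ^ 2 + 2 * real z - 1)"
proof -
  have "(2 * card linked_pairs + card C) * (z + 1) \<le> card C * z * (z + 1)"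
    using card_linked_pairs by (rule mult_right_mono) simp
  then have "real ((2 * card linked_pairs + card C) * (z + 1)) \<le> real (card C * z * (z + 1))"
    by (simp only: of_nat_le_iff)
  moreover have "real (card kept) \<le> real (card C * z + card linked_pairs * Suc z)"
    using card_kept by (simp only: of_nat_le_iff)
  ultimately show ?thesis by (simp add: algebra_simps power2_eq_square)
qed

end

lemma fvs_certificateI:
  assumes "wf_mgraph G" "certificate_of_order G C z H"
  shows "fvs_certificate H C z"
  using assms wf_subgraph unfolding certificate_of_order_def certificate_def min_fvs_def
  by unfold_locales blast+

theorem lemma14:
  fixes G :: "('v, 'e) mgraph" and z :: nat and C F :: "'v set"
  assumes "wf_mgraph G"
    and "z_antler G z C F"
  shows "\<exists>F' \<subseteq> F. z_antler G z C F' \<and>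
           real (card (components (induced G F'))) \<le>
             real (card C) / 2 * (real z ^ 2 + 2 * real z - 1)"
proof -
  note wfG = assms(1)
  obtain H where fvc: "FVC G C F" and cert: "certificate_of_order (induced G (C \<union> F)) C z H"
    using assms(2) unfolding z_antler_def antler_def by blast
  interpret fvs_certificate H C z by (rule fvs_certificateI[OF wf_induced[OF wfG] cert])
  have HG: "subgraph H G" "verts H \<subseteq> C \<union> F"
    using cert unfolding certificate_of_order_def certificate_def by auto
  have "subgraph (del_verts H C) (induced G F)"
    using subgraph_trans[OF induced_subgraph[OF local.wf] HG(1)] HG(2) unfolding del_verts_def by auto
  then obtain SS where SS: "SS \<subseteq> components (induced G F)" "\<Union>kept \<subseteq> \<Union>SS" "card SS \<le> card kept"
    using components_cover[OF wfG _ kept_subset_trees[unfolded trees_def] finite_kept] by blast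
  have "\<Union>SS \<subseteq> F" using SS(1) components_induced_subset by blast
  moreover have "z_antler G z C (\<Union>SS)"
  proof (rule z_antlerI[OF wfG FVC_Union_components[OF wfG fvc SS(1)]])
    show "certificate_of_order (induced G (C \<union> \<Union>SS)) C z pruned"
      by (rule certificate_of_order_pruned[OF HG(1)]) (use SS(2) in blast)
  qed
  moreover have "card (components (induced G (\<Union>SS))) \<le> card kept"
    using components_induced_Union[OF wfG SS(1)] SS(3) by simp
  ultimately show ?thesis using card_kept_le by (meson of_nat_le_iff order_trans)
qed

end
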